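(* Let $k\ge 1$, $c\ge 1$, $t\ge 1$ be integers. Assume that every $k$-tree admits a $c$-clique-colorable $t$-track layout. Then every $(k+1)$-tree admits a track layout on $t\cdot(2c+1)$ tracks, i.e. has track number at most $t(2c+1)$.
   Context: All graphs are finite, simple and undirected. A $k$-tree is defined recursively: the complete graph $K_k$ is a $k$-tree, and adding to a $k$-tree a new vertex adjacent to all vertices of some $k$-clique yields a $k$-tree. A $t$-track assignment of a graph $G$ is a partition of $V(G)$ into $t$ sets $V_1,\dots,V_t$ (tracks), each an independent set of $G$, together with a total order $<_i$ on each $V_i$. An X-crossing consists of two edges $(u,v)$ and $(x,y)$ with $u,x\in V_i$, $v,y\in V_j$ ($i\neq j$), $u<_i x$ and $y<_j v$. A $t$-track layout is a $t$-track assignment with no X-crossing; the track number $\mathrm{tn}(G)$ is the minimum $t$ for which $G$ has a $t$-track layout. Given a track layout of $G$, a clique $C_1$ precedes a clique $C_2$, written $C_1\prec C_2$, if for every track $V_i$ and all $u\in V_i\cap C_1$, $w\in V_i\cap C_2$ we have $u\le_i w$. A set $S$ of cliques is nicely ordered if its elements can be listed as $C_1,\dots,C_{|S|}$ with $C_i\prec C_j$ for all $i<j$. A track layout of $G$ is $c$-clique-colorable if the set of all maximal cliques of $G$ can be partitioned into $c$ nicely ordered subsets. *)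

theory Defs
  imports Main
begin

definition complete_edges :: "nat set \<Rightarrow> (nat \<times> nat) set" where
  "complete_edges C = {(u,w). u \<in> C \<and> w \<in> C \<and> u \<noteq> w}"

inductive ktree :: "nat \<Rightarrow> nat set \<Rightarrow> (nat \<times> nat) set \<Rightarrow> bool" for k :: nat where
  base: "finite V \<Longrightarrow> card V = k \<Longrightarrow> ktree k V (complete_edges V)"
| step: "ktree k V E \<Longrightarrow> C \<subseteq> V \<Longrightarrow> card C = k \<Longrightarrow> complete_edges C \<subseteq> E \<Longrightarrow> v \<notin> V
         \<Longrightarrow> ktree k (insert v V) (E \<union> {(v,w) | w. w \<in> C} \<union> {(w,v) | w. w \<in> C})"

definition track_assignment ::
  "nat set \<Rightarrow> (nat \<times> nat) set \<Rightarrow> nat \<Rightarrow> (nat \<Rightarrow> nat) \<Rightarrow> (nat \<Rightarrow> nat rel) \<Rightarrow> bool" where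
  "track_assignment V E t tr ord \<longleftrightarrow>
     (\<forall>v\<in>V. tr v < t) \<and>
     (\<forall>u w. (u,w) \<in> E \<longrightarrow> tr u \<noteq> tr w) \<and>
     (\<forall>i<t. linear_order_on {v\<in>V. tr v = i} (ord i))"

definition has_X_crossing ::
  "(nat \<times> nat) set \<Rightarrow> (nat \<Rightarrow> nat) \<Rightarrow> (nat \<Rightarrow> nat rel) \<Rightarrow> bool" where
  "has_X_crossing E tr ord \<longleftrightarrow>
     (\<exists>u v x y. (u,v) \<in> E \<and> (x,y) \<in> E \<and> tr u = tr x \<and> tr v = tr y \<and> tr u \<noteq> tr v \<and>
        (u,x) \<in> ord (tr u) \<and> u \<noteq> x \<and> (y,v) \<in> ord (tr v) \<and> y \<noteq> v)"

definition track_layout ::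
  "nat set \<Rightarrow> (nat \<times> nat) set \<Rightarrow> nat \<Rightarrow> (nat \<Rightarrow> nat) \<Rightarrow> (nat \<Rightarrow> nat rel) \<Rightarrow> bool" where
  "track_layout V E t tr ord \<longleftrightarrow> track_assignment V E t tr ord \<and> \<not> has_X_crossing E tr ord"

definition track_number :: "nat set \<Rightarrow> (nat \<times> nat) set \<Rightarrow> nat" where
  "track_number V E = (LEAST t. \<exists>tr ord. track_layout V E t tr ord)"

definition is_clique :: "nat set \<Rightarrow> (nat \<times> nat) set \<Rightarrow> nat set \<Rightarrow> bool" where
  "is_clique V E C \<longleftrightarrow> C \<subseteq> V \<and> (\<forall>u\<in>C. \<forall>w\<in>C. u \<noteq> w \<longrightarrow> (u,w) \<in> E)"

definition maximal_cliques :: "nat set \<Rightarrow> (nat \<times> nat) set \<Rightarrow> nat set set" where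
  "maximal_cliques V E = {C. is_clique V E C \<and> (\<forall>D. is_clique V E D \<and> C \<subseteq> D \<longrightarrow> D = C)}"

definition clique_precedes ::
  "(nat \<Rightarrow> nat) \<Rightarrow> (nat \<Rightarrow> nat rel) \<Rightarrow> nat set \<Rightarrow> nat set \<Rightarrow> bool" where
  "clique_precedes tr ord C1 C2 \<longleftrightarrow>
     (\<forall>u\<in>C1. \<forall>w\<in>C2. tr u = tr w \<longrightarrow> (u,w) \<in> ord (tr u))"

definition nicely_ordered ::
  "(nat \<Rightarrow> nat) \<Rightarrow> (nat \<Rightarrow> nat rel) \<Rightarrow> nat set set \<Rightarrow> bool" where
  "nicely_ordered tr ord S \<longleftrightarrow>
     (\<exists>L. distinct L \<and> set L = S \<and>
        (\<forall>i j. i < j \<and> j < length L \<longrightarrow> clique_precedes tr ord (L ! i) (L ! j)))"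

definition clique_colorable ::
  "nat set \<Rightarrow> (nat \<times> nat) set \<Rightarrow> (nat \<Rightarrow> nat) \<Rightarrow> (nat \<Rightarrow> nat rel) \<Rightarrow> nat \<Rightarrow> bool" where
  "clique_colorable V E tr ord c \<longleftrightarrow>
     (\<exists>col :: nat set \<Rightarrow> nat. (\<forall>C\<in>maximal_cliques V E. col C < c) \<and>
        (\<forall>j<c. nicely_ordered tr ord {C \<in> maximal_cliques V E. col C = j}))"

end

theory Submission
  imports Defs "HOL-Library.List_Lexorder" "HOL-Library.Product_Lexorder"
begin

(* Grow the (k+1)-tree vertex by vertex and layer it by levels: every edge stays inside a level or
   joins consecutive levels, and each block of a level sees a single clique of the level below, its
   parent clique. All edges inside levels fit into one k-tree on the same vertex set, which by hypothesis
   has a c-clique-colourable t-track layout.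
   A vertex v goes to track (s v, old track of v), where s v in Z/(2c+1) is s of a vertex of its parent
   clique plus 1 + (colour of the maximal clique containing the parent clique). As 1 + colour lies in
   [1, c], an edge between levels always changes s, and two edges between the same pair of tracks cannot
   run in opposite directions. Within a track vertices are ordered by level, then lexicographically by
   the positions of their ancestors' parent cliques in their colour classes, then by the old order; a
   crossing of two flat edges is then a crossing of the old layout, and a crossing of two rising edges
   contradicts the nice order of a colour class. *)

lemma ktree_finite_edges: "ktree k V E \<Longrightarrow> finite V \<and> E \<subseteq> V \<times> V"
  by (induction rule: ktree.induct) (auto simp: complete_edges_def)

lemma ktree_sym: "ktree k V E \<Longrightarrow> (u,w) \<in> E \<Longrightarrow> (w,u) \<in> E"
  by (induction arbitrary: u w rule: ktree.induct) (auto simp: complete_edges_def)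

lemma ktree_complete:
  assumes "finite V" "card V = Suc k"
  shows "ktree k V (complete_edges V)"
proof -
  obtain v where v: "v \<in> V" using assms by fastforce
  have "ktree k (V - {v}) (complete_edges (V - {v}))"
    using assms v by (intro ktree.base) auto
  from ktree.step[OF this subset_refl _ subset_refl, of v]
  have "ktree k (insert v (V - {v}))
      (complete_edges (V - {v}) \<union> {(v,w) | w. w \<in> V - {v}} \<union> {(w,v) | w. w \<in> V - {v}})"
    using assms v by simp
  moreover have "complete_edges (V - {v}) \<union> {(v,w) | w. w \<in> V - {v}} \<union> {(w,v) | w. w \<in> V - {v}}
      = complete_edges V"
    using v by (auto simp: complete_edges_def)
  ultimately show ?thesis using v by (simp add: insert_absorb)
qed

lemma obtain_subset_between:
  assumes "finite B" "A \<subseteq> B" "card A \<le> n" "n \<le> card B"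
  obtains X where "A \<subseteq> X" "X \<subseteq> B" "card X = n"
proof -
  have "finite A" using assms(1,2) finite_subset by blast
  have "n - card A \<le> card (B - A)" using assms by (simp add: card_Diff_subset \<open>finite A\<close>)
  then obtain Y where Y: "Y \<subseteq> B - A" "card Y = n - card A" "finite Y"
    by (rule obtain_subset_with_card_n)
  have "card (A \<union> Y) = n"
    using Y assms(3) \<open>finite A\<close> by (subst card_Un_disjoint) auto
  then show ?thesis using that[of "A \<union> Y"] Y assms(2) by blast
qed

lemma complete_edges_insert_subset:
  assumes "K \<subseteq> C" "complete_edges C \<subseteq> E"
  shows "complete_edges (insert v K) \<subseteq> E \<union> {(v,w) | w. w \<in> C} \<union> {(w,v) | w. w \<in> C}"
proof
  fix x assume "x \<in> complete_edges (insert v K)"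
  then obtain a b where x: "x = (a,b)" "a \<in> insert v K" "b \<in> insert v K" "a \<noteq> b"
    by (auto simp: complete_edges_def)
  have "a \<in> K \<Longrightarrow> b \<in> K \<Longrightarrow> (a,b) \<in> E"
    using assms x(4) unfolding complete_edges_def by blast
  then show "x \<in> E \<union> {(v,w) | w. w \<in> C} \<union> {(w,v) | w. w \<in> C}" using x assms(1) by blast
qed

lemma ktree_clique_extends:
  assumes "ktree k V E"
  shows "S \<subseteq> V \<Longrightarrow> \<forall>u\<in>S. \<forall>w\<in>S. u \<noteq> w \<longrightarrow> (u,w) \<in> E \<Longrightarrow> card S \<le> k \<Longrightarrow>
    \<exists>K. S \<subseteq> K \<and> K \<subseteq> V \<and> card K = k \<and> complete_edges K \<subseteq> E"
  using assms
proof (induction arbitrary: S rule: ktree.induct)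
  case (base V) then show ?case by auto
next
  case (step V E C v)
  have EV: "E \<subseteq> V \<times> V" "finite V" using ktree_finite_edges[OF step.hyps(1)] by auto
  show ?case
  proof (cases "v \<in> S")
    case False
    have SV: "S \<subseteq> V" using step.prems(1) False by blast
    have SE: "\<forall>u\<in>S. \<forall>w\<in>S. u \<noteq> w \<longrightarrow> (u,w) \<in> E"
    proof (intro ballI impI)
      fix u w assume uw: "u \<in> S" "w \<in> S" "u \<noteq> w"
      then have "(u,w) \<in> E \<union> {(v,w) | w. w \<in> C} \<union> {(w,v) | w. w \<in> C}"
        using step.prems(2) by blast
      moreover have "u \<noteq> v" "w \<noteq> v" using uw False by auto
      ultimately show "(u,w) \<in> E" by blast
    qed
    show ?thesis using step.IH[OF SV SE step.prems(3)] by blast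
  next
    case True
    have S'C: "S - {v} \<subseteq> C"
    proof
      fix w assume w: "w \<in> S - {v}"
      then have "(v,w) \<in> E \<union> {(v,w) | w. w \<in> C} \<union> {(w,v) | w. w \<in> C}"
        using step.prems(2) True by auto
      moreover have "(v,w) \<notin> E" using EV step.hyps(5) by auto
      ultimately show "w \<in> C" using w by auto
    qed
    have fC: "finite C" using EV step.hyps(2) finite_subset by blast
    have fS: "finite S" using step.prems(1) EV by (meson finite_insert finite_subset)
    have k1: "k \<ge> 1" using True step.prems(3) fS card_0_eq by fastforce
    have "card (S - {v}) \<le> k - 1" "k - 1 \<le> card C" using step.prems(3) True fS step.hyps(3) by simp_all
    then obtain K0 where K0: "S - {v} \<subseteq> K0" "K0 \<subseteq> C" "card K0 = k - 1"
      by (rule obtain_subset_between[OF fC S'C])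
    have vK0: "v \<notin> K0" using K0 step.hyps(2,5) by auto
    have fK0: "finite K0" using K0 fC finite_subset by blast
    show ?thesis
    proof (intro exI conjI)
      show "S \<subseteq> insert v K0" using K0 True by auto
      show "insert v K0 \<subseteq> insert v V" using K0 step.hyps(2) by auto
      show "card (insert v K0) = k" using vK0 fK0 K0 k1 by simp
      show "complete_edges (insert v K0) \<subseteq> E \<union> {(v,w) | w. w \<in> C} \<union> {(w,v) | w. w \<in> C}"
        using complete_edges_insert_subset[OF K0(2) step.hyps(4)] .
    qed
  qed
qed

lemma maximal_clique_superset:
  assumes "finite V" "is_clique V E C"
  shows "\<exists>M\<in>maximal_cliques V E. C \<subseteq> M"
proof -
  let ?X = "{D. is_clique V E D \<and> C \<subseteq> D}"
  have "?X \<subseteq> Pow V" by (auto simp: is_clique_def)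
  then have "finite ?X" using assms(1) finite_subset by blast
  moreover have "C \<in> ?X" using assms(2) by blast
  ultimately obtain M where M: "M \<in> ?X" "\<forall>D\<in>?X. M \<subseteq> D \<longrightarrow> M = D"
    by (metis (no_types, lifting) finite_has_maximal2)
  have "M \<in> maximal_cliques V E"
    unfolding maximal_cliques_def
  proof (intro CollectI conjI allI impI)
    show "is_clique V E M" using M(1) by blast
    fix D assume "is_clique V E D \<and> M \<subseteq> D"
    then show "D = M" using M by blast
  qed
  then show ?thesis using M(1) by blast
qed

lemma mod_add_left_cancel_less:
  fixes a d d' m :: nat
  assumes "(a + d) mod m = (a + d') mod m" "d < m" "d' < m"
  shows "d = d'"
proof -
  have "d' \<le> d" if "d \<le> d'" "(a + d) mod m = (a + d') mod m" "d' < m" for d d'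
  proof -
    have "m dvd d' - d" using mod_eq_dvd_iff_nat[of "a + d" "a + d'" m] that by simp
    then show ?thesis using that(3) by (cases "d' - d = 0") (auto dest: dvd_imp_le)
  qed
  then show ?thesis using assms by (metis le_antisym nle_le)
qed

lemma append_le_append_same_length:
  fixes a b x y :: "'a::linorder list"
  assumes "length a = length b"
  shows "a @ x \<le> b @ y \<longleftrightarrow> a < b \<or> a = b \<and> x \<le> y"
  using assms
proof (induction a arbitrary: b)
  case (Cons h a)
  then obtain h' b' where "b = h' # b'" "length a = length b'" by (cases b) auto
  then show ?case using Cons.IH by auto
qed simp

lemma linear_order_on_refine:
  fixes f :: "'a \<Rightarrow> 'b::linorder"
  assumes "linear_order_on B r" "A \<subseteq> B"
  shows "linear_order_on A {(v,w). v \<in> A \<and> w \<in> A \<and> (f v < f w \<or> f v = f w \<and> (v,w) \<in> r)}"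
    (is "linear_order_on A ?R")
proof -
  have r: "refl_on B r" "trans r" "antisym r" "total_on B r"
    using assms(1) unfolding linear_order_on_def partial_order_on_def preorder_on_def by blast+
  have "refl_on A ?R" using r(1) assms(2) unfolding refl_on_def by blast
  moreover have "trans ?R"
  proof (rule transI)
    fix u v w assume uv: "(u,v) \<in> ?R" and vw: "(v,w) \<in> ?R"
    show "(u,w) \<in> ?R"
    proof (cases "f u = f v \<and> f v = f w")
      case True
      then have "(u,v) \<in> r" "(v,w) \<in> r" using uv vw by auto
      then show ?thesis using r(2) True uv vw by (auto dest: transD)
    next
      case False
      then have "f u < f w" using uv vw by auto
      then show ?thesis using uv vw by blast
    qed
  qed
  moreover have "antisym ?R" using r(3) unfolding antisym_def by auto
  moreover have "total_on A ?R" using r(4) assms(2) unfolding total_on_def by (auto simp: neq_iff)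
  moreover have "?R \<subseteq> A \<times> A" by blast
  ultimately show ?thesis
    unfolding linear_order_on_def partial_order_on_def preorder_on_def by blast
qed

(* L levels the vertices, R names the block of a vertex (flat edges stay inside a block) and P the
   parent clique of a block in the level below; E' is one k-tree on V containing all flat edges.
   Blocks are named by vertices only so that a new vertex yields a fresh name. *)
locale ktree_layering =
  fixes k :: nat and V :: "nat set" and E :: "(nat \<times> nat) set"
    and L R :: "nat \<Rightarrow> nat" and P :: "nat \<Rightarrow> nat set" and E' :: "(nat \<times> nat) set"
  assumes ktree_layers: "ktree k V E'"
    and edge_in_V: "(u,w) \<in> E \<Longrightarrow> u \<in> V \<and> w \<in> V"
    and edge_levels: "(u,w) \<in> E \<Longrightarrow> L u = L w \<or> L u = Suc (L w) \<or> L w = Suc (L u)"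
    and flat_edge: "(u,w) \<in> E \<Longrightarrow> L u = L w \<Longrightarrow> (u,w) \<in> E' \<and> R u = R w"
    and rising_edge: "(u,w) \<in> E \<Longrightarrow> Suc (L u) = L w \<Longrightarrow> u \<in> P (R w)"
    and parents_nonempty: "w \<in> V \<Longrightarrow> 0 < L w \<Longrightarrow> P (R w) \<noteq> {}"
    and parents_in_V: "w \<in> V \<Longrightarrow> 0 < L w \<Longrightarrow> P (R w) \<subseteq> V"
    and parents_level: "w \<in> V \<Longrightarrow> 0 < L w \<Longrightarrow> p \<in> P (R w) \<Longrightarrow> Suc (L p) = L w"
    and parents_clique: "w \<in> V \<Longrightarrow> 0 < L w \<Longrightarrow> p \<in> P (R w) \<Longrightarrow> q \<in> P (R w) \<Longrightarrow> p \<noteq> q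
      \<Longrightarrow> (p,q) \<in> E"
    and block_in_V: "w \<in> V \<Longrightarrow> R w \<in> V"

locale ktree_layering_step = ktree_layering +
  fixes C :: "nat set" and v :: nat
  assumes C_subset: "C \<subseteq> V" and card_C: "card C = Suc k"
    and C_clique: "complete_edges C \<subseteq> E" and v_new: "v \<notin> V"
begin

definition "base = Min (L ` C)"
definition "upper = {w \<in> C. L w = Suc base}"
definition "K = (SOME K. upper \<subseteq> K \<and> K \<subseteq> V \<and> card K = k \<and> complete_edges K \<subseteq> E')"

definition "E_new = E \<union> {(v,w) | w. w \<in> C} \<union> {(w,v) | w. w \<in> C}"
definition "L_new = L(v := Suc base)"
definition "upper_rep = (SOME w. w \<in> upper)"
definition "R_new = R(v := if upper = {} then v else R upper_rep)"
definition "P_new = (if upper = {} then P(v := C) else P)"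
definition "E'_new = E' \<union> {(v,w) | w. w \<in> K} \<union> {(w,v) | w. w \<in> K}"

lemma finite_C: "finite C"
  using ktree_finite_edges[OF ktree_layers] C_subset finite_subset by blast

lemma C_edge: "a \<in> C \<Longrightarrow> b \<in> C \<Longrightarrow> a \<noteq> b \<Longrightarrow> (a,b) \<in> E"
  using C_clique by (auto simp: complete_edges_def)

lemma base_attained: "\<exists>w0\<in>C. L w0 = base"
proof -
  have "C \<noteq> {}" using card_C by auto
  then have "base \<in> L ` C" unfolding base_def using finite_C by (intro Min_in) auto
  then show ?thesis by auto
qed

lemma C_levels: "w \<in> C \<Longrightarrow> L w = base \<or> L w = Suc base"
proof -
  assume w: "w \<in> C"
  obtain w0 where w0: "w0 \<in> C" "L w0 = base" using base_attained by blast
  have "base \<le> L w" unfolding base_def using finite_C w by simp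
  then show ?thesis using w w0 C_edge[of w0 w] edge_levels[of w0 w] by fastforce
qed

lemma card_upper: "card upper \<le> k"
proof -
  obtain w0 where "w0 \<in> C" "L w0 = base" using base_attained by blast
  then have "upper \<subseteq> C - {w0}" unfolding upper_def by auto
  then show ?thesis using card_mono[of "C - {w0}" upper] finite_C card_C \<open>w0 \<in> C\<close> by simp
qed

lemma upper_clique: "u \<in> upper \<Longrightarrow> w \<in> upper \<Longrightarrow> u \<noteq> w \<Longrightarrow> (u,w) \<in> E' \<and> R u = R w"
  unfolding upper_def using C_edge flat_edge by auto

lemma K_clique: "upper \<subseteq> K" "K \<subseteq> V" "card K = k" "complete_edges K \<subseteq> E'"
proof -
  have "\<exists>K. upper \<subseteq> K \<and> K \<subseteq> V \<and> card K = k \<and> complete_edges K \<subseteq> E'"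
    using ktree_clique_extends[OF ktree_layers _ _ card_upper] C_subset upper_clique
    unfolding upper_def by blast
  then have "upper \<subseteq> K \<and> K \<subseteq> V \<and> card K = k \<and> complete_edges K \<subseteq> E'"
    unfolding K_def by (rule someI_ex)
  then show "upper \<subseteq> K" "K \<subseteq> V" "card K = k" "complete_edges K \<subseteq> E'" by blast+
qed

lemma R_new_old: "x \<in> V \<Longrightarrow> R_new x = R x"
  unfolding R_new_def using v_new by auto

lemma P_new_old: "x \<in> V \<Longrightarrow> P_new (R x) = P (R x)"
proof -
  assume "x \<in> V"
  then have "R x \<noteq> v" using block_in_V v_new by metis
  then show ?thesis unfolding P_new_def by simp
qed

lemma upper_rep: "upper \<noteq> {} \<Longrightarrow> upper_rep \<in> upper"
  unfolding upper_rep_def by (simp add: some_in_eq)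

lemma R_new_upper:
  assumes "w \<in> upper"
  shows "R_new v = R w"
proof -
  have "upper_rep \<in> upper" using assms upper_rep by blast
  then have "R upper_rep = R w"
    using upper_clique[of upper_rep w] assms by (cases "upper_rep = w") simp_all
  moreover have "upper \<noteq> {}" using assms by blast
  ultimately show ?thesis unfolding R_new_def by simp
qed

lemma R_new_in: "R_new v \<in> insert v V"
proof (cases "upper = {}")
  case False
  then have "upper_rep \<in> V" using upper_rep C_subset unfolding upper_def by blast
  then show ?thesis using False block_in_V unfolding R_new_def by simp
qed (simp add: R_new_def)

lemma new_parents_v:
  "P_new (R_new v) \<noteq> {} \<and> P_new (R_new v) \<subseteq> V \<and> {w \<in> C. L w = base} \<subseteq> P_new (R_new v) \<and>
   (\<forall>p\<in>P_new (R_new v). L p = base) \<and>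
   (\<forall>p\<in>P_new (R_new v). \<forall>q\<in>P_new (R_new v). p \<noteq> q \<longrightarrow> (p,q) \<in> E)"
proof (cases "upper = {}")
  case True
  then have "L w = base" if "w \<in> C" for w using C_levels that unfolding upper_def by blast
  then show ?thesis
    using True card_C C_subset C_edge unfolding P_new_def R_new_def by auto
next
  case False
  then obtain w1 where w1: "w1 \<in> upper" by blast
  then have w1C: "w1 \<in> C" "L w1 = Suc base" "w1 \<in> V" using C_subset unfolding upper_def by auto
  have "P_new (R_new v) = P (R w1)" using False R_new_upper[OF w1] unfolding P_new_def by simp
  moreover have "w \<in> P (R w1)" if "w \<in> C" "L w = base" for w
    using that w1C C_edge[of w w1] rising_edge[of w w1] by (cases "w = w1") auto
  ultimately show ?thesis
    using w1C parents_nonempty parents_in_V parents_level parents_clique by fastforce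
qed

lemma mem_E_new: "(x,y) \<in> E_new \<longleftrightarrow> (x,y) \<in> E \<or> x = v \<and> y \<in> C \<or> y = v \<and> x \<in> C"
  unfolding E_new_def by auto

lemma mem_E'_new: "(x,y) \<in> E'_new \<longleftrightarrow> (x,y) \<in> E' \<or> x = v \<and> y \<in> K \<or> y = v \<and> x \<in> K"
  unfolding E'_new_def by auto

lemma new_edgeE:
  assumes "(x,y) \<in> E_new"
  obtains (old) "(x,y) \<in> E" "x \<in> V" "y \<in> V" | (out) "x = v" "y \<in> C" | (into) "y = v" "x \<in> C"
  using assms edge_in_V unfolding mem_E_new by metis

lemma L_new_old: "x \<in> V \<Longrightarrow> L_new x = L x"
  unfolding L_new_def using v_new by auto

lemma L_new_v: "L_new v = Suc base"
  unfolding L_new_def by simp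

lemma C_in_V: "x \<in> C \<Longrightarrow> x \<in> V"
  using C_subset by blast

lemma new_flat_edge:
  assumes "(x,y) \<in> E_new" "L_new x = L_new y"
  shows "(x,y) \<in> E'_new \<and> R_new x = R_new y"
  using assms(1)
proof (cases rule: new_edgeE)
  case old then show ?thesis
    using assms(2) flat_edge R_new_old L_new_old mem_E'_new by auto
next
  case out
  then have "y \<in> upper" using assms(2) L_new_old[OF C_in_V] L_new_v unfolding upper_def by auto
  then show ?thesis using out K_clique(1) R_new_upper R_new_old[OF C_in_V] mem_E'_new by auto
next
  case into
  then have "x \<in> upper" using assms(2) L_new_old[OF C_in_V] L_new_v unfolding upper_def by auto
  then show ?thesis using into K_clique(1) R_new_upper R_new_old[OF C_in_V] mem_E'_new by auto
qed

lemma new_rising_edge: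
  assumes "(x,y) \<in> E_new" "Suc (L_new x) = L_new y"
  shows "x \<in> P_new (R_new y)"
  using assms(1)
proof (cases rule: new_edgeE)
  case old then show ?thesis
    using assms(2) rising_edge P_new_old R_new_old L_new_old by auto
next
  case out then show ?thesis
    using assms(2) C_levels[of y] L_new_old[OF C_in_V] L_new_v by auto
next
  case into then show ?thesis
    using assms(2) new_parents_v L_new_old[OF C_in_V] L_new_v by auto
qed

lemma new_parents:
  assumes w: "w \<in> insert v V" "0 < L_new w"
  shows "P_new (R_new w) \<noteq> {} \<and> P_new (R_new w) \<subseteq> V \<and> (\<forall>p\<in>P_new (R_new w). Suc (L_new p) = L_new w) \<and>
    (\<forall>p\<in>P_new (R_new w). \<forall>q\<in>P_new (R_new w). p \<noteq> q \<longrightarrow> (p,q) \<in> E)"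
proof (cases "w = v")
  case True
  then show ?thesis using new_parents_v L_new_old L_new_v by (auto simp: subset_iff)
next
  case False
  then have wV: "w \<in> V" and Lw: "0 < L w" using w L_new_old by auto
  then have "P_new (R_new w) = P (R w)" using P_new_old R_new_old by simp
  then show ?thesis
    using parents_nonempty[OF wV Lw] parents_in_V[OF wV Lw] parents_level[OF wV Lw]
      parents_clique[OF wV Lw] L_new_old wV by (auto simp: subset_iff)
qed

lemma ktree_layering_new: "ktree_layering k (insert v V) E_new L_new R_new P_new E'_new"
proof
  show "ktree k (insert v V) E'_new"
    unfolding E'_new_def using ktree.step[OF ktree_layers K_clique(2,3,4) v_new] .
next
  fix u w assume "(u,w) \<in> E_new"
  then show "u \<in> insert v V \<and> w \<in> insert v V"
    by (cases rule: new_edgeE) (auto dest: C_in_V)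
next
  fix u w assume "(u,w) \<in> E_new"
  then show "L_new u = L_new w \<or> L_new u = Suc (L_new w) \<or> L_new w = Suc (L_new u)"
    by (cases rule: new_edgeE)
      (use edge_levels L_new_old L_new_v C_levels C_in_V in \<open>fastforce+\<close>)
next
  fix u w assume "(u,w) \<in> E_new" "L_new u = L_new w"
  then show "(u,w) \<in> E'_new \<and> R_new u = R_new w" by (rule new_flat_edge)
next
  fix u w assume "(u,w) \<in> E_new" "Suc (L_new u) = L_new w"
  then show "u \<in> P_new (R_new w)" by (rule new_rising_edge)
next
  fix w p q assume "w \<in> insert v V" "0 < L_new w"
  note new_parents[OF this]
  moreover have "E \<subseteq> E_new" using mem_E_new by auto
  ultimately show "P_new (R_new w) \<noteq> {}" "P_new (R_new w) \<subseteq> insert v V"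
    "p \<in> P_new (R_new w) \<Longrightarrow> Suc (L_new p) = L_new w"
    "p \<in> P_new (R_new w) \<Longrightarrow> q \<in> P_new (R_new w) \<Longrightarrow> p \<noteq> q \<Longrightarrow> (p,q) \<in> E_new"
    by blast+
next
  fix w assume "w \<in> insert v V"
  then show "R_new w \<in> insert v V" using R_new_in R_new_old block_in_V by auto
qed

end

lemma ktree_layering_exists:
  assumes "ktree (Suc k) V E"
  shows "\<exists>L R P E'. ktree_layering k V E L R P E'"
  using assms
proof (induction rule: ktree.induct)
  case (base V)
  obtain r where "r \<in> V" using base by fastforce
  then have "ktree_layering k V (complete_edges V) (\<lambda>_. 0) (\<lambda>_. r) (\<lambda>_. {}) (complete_edges V)"
    using ktree_complete[OF base] by unfold_locales (auto simp: complete_edges_def)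
  then show ?case by blast
next
  case (step V E C v)
  then obtain L R P E' where "ktree_layering k V E L R P E'" by blast
  then interpret ktree_layering_step k V E L R P E' C v
    using step.hyps(2-5) by (intro ktree_layering_step.intro ktree_layering_step_axioms.intro)
  have "ktree_layering k (insert v V) (E \<union> {(v,w) | w. w \<in> C} \<union> {(w,v) | w. w \<in> C})
    L_new R_new P_new E'_new"
    using ktree_layering_new unfolding E_new_def .
  then show ?case by blast
qed

locale layered_track_layout = ktree_layering +
  fixes t c :: nat and tr :: "nat \<Rightarrow> nat" and ord :: "nat \<Rightarrow> nat rel" and col :: "nat set \<Rightarrow> nat"
  assumes E_sym: "(u,w) \<in> E \<Longrightarrow> (w,u) \<in> E"
    and layout: "track_layout V E' t tr ord"
    and col_less: "C \<in> maximal_cliques V E' \<Longrightarrow> col C < c"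
    and col_nicely_ordered: "j < c \<Longrightarrow> nicely_ordered tr ord {C \<in> maximal_cliques V E'. col C = j}"
begin

lemma finite_V: "finite V"
  using ktree_finite_edges[OF ktree_layers] by blast

lemma tr_less: "v \<in> V \<Longrightarrow> tr v < t"
  and tr_edge: "(u,w) \<in> E' \<Longrightarrow> tr u \<noteq> tr w"
  and ord_linear: "i < t \<Longrightarrow> linear_order_on {v\<in>V. tr v = i} (ord i)"
  and no_old_crossing: "\<not> has_X_crossing E' tr ord"
  using layout unfolding track_layout_def track_assignment_def by blast+

lemma ord_antisym:
  assumes "(a,b) \<in> ord i" "(b,a) \<in> ord i" "a \<in> V" "tr a = i"
  shows "a = b"
proof -
  have "antisym (ord i)"
    using ord_linear[of i] tr_less[OF assms(3)] assms(4)
    unfolding linear_order_on_def partial_order_on_def by blast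
  then show ?thesis using assms(1,2) by (rule antisymD)
qed

(* Any choice is as good: all vertices of P (R v) lie in one block (parent_facts). *)
definition "parent v = (SOME p. p \<in> P (R v))"
definition "parent_clique v = (SOME M. M \<in> maximal_cliques V E' \<and> P (R v) \<subseteq> M)"
definition "colour v = col (parent_clique v)"
definition "colour_class j = (SOME Cs. distinct Cs \<and> set Cs = {C \<in> maximal_cliques V E'. col C = j} \<and>
  (\<forall>i j'. i < j' \<and> j' < length Cs \<longrightarrow> clique_precedes tr ord (Cs ! i) (Cs ! j')))"
definition "clique_index v =
  (SOME i. i < length (colour_class (colour v)) \<and> colour_class (colour v) ! i = parent_clique v)"

primrec shift_at :: "nat \<Rightarrow> nat \<Rightarrow> nat" where
  "shift_at 0 v = 0"
| "shift_at (Suc n) v = (shift_at n (parent v) + Suc (colour v)) mod (2 * c + 1)"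

primrec key_at :: "nat \<Rightarrow> nat \<Rightarrow> nat list" where
  "key_at 0 v = []"
| "key_at (Suc n) v = key_at n (parent v) @ [clique_index v]"

definition "shift v = shift_at (L v) v"
definition "key v = key_at (L v) v"
definition "track v = shift v * t + tr v"
definition "before v w \<longleftrightarrow> (L v, key v) < (L w, key w) \<or> (L v, key v) = (L w, key w) \<and> (v,w) \<in> ord (tr v)"
definition "track_order i = {(v,w). v \<in> V \<and> w \<in> V \<and> track v = i \<and> track w = i \<and> before v w}"

lemma before_cases:
  "before v w \<Longrightarrow> L v < L w \<or> L v = L w \<and> (key v < key w \<or> key v = key w \<and> (v,w) \<in> ord (tr v))"
  unfolding before_def by auto

lemma block_determines_parent:
  "R v = R w \<Longrightarrow> parent v = parent w \<and> colour v = colour w \<and> clique_index v = clique_index w"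
  unfolding parent_def colour_def clique_index_def parent_clique_def by simp

lemma shift_at_block: "R v = R w \<Longrightarrow> shift_at n v = shift_at n w"
  and key_at_block: "R v = R w \<Longrightarrow> key_at n v = key_at n w"
  using block_determines_parent[of v w] by (cases n; simp)+

lemma length_key_at: "length (key_at n v) = n"
  by (induction n arbitrary: v) simp_all

lemma parent_facts:
  assumes "v \<in> V" "0 < L v" "u \<in> P (R v)"
  shows "u \<in> V \<and> Suc (L u) = L v \<and> R u = R (parent v)"
proof -
  have p: "parent v \<in> P (R v)"
    unfolding parent_def using parents_nonempty[OF assms(1,2)] by (simp add: some_in_eq)
  have "R u = R (parent v)"
  proof (cases "u = parent v")
    case False
    then show ?thesis using flat_edge parents_clique[OF assms(1,2) assms(3) p]
      parents_level[OF assms(1,2)] assms(3) p by (metis Suc_inject)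
  qed simp
  then show ?thesis using parents_in_V[OF assms(1,2)] parents_level[OF assms(1,2)] assms(3) by blast
qed

lemma parent_clique:
  assumes "v \<in> V" "0 < L v"
  shows "parent_clique v \<in> maximal_cliques V E' \<and> P (R v) \<subseteq> parent_clique v"
proof -
  have "is_clique V E' (P (R v))"
    unfolding is_clique_def
    using parents_in_V[OF assms] parents_clique[OF assms] parents_level[OF assms] flat_edge
    by (metis Suc_inject)
  then have "\<exists>M. M \<in> maximal_cliques V E' \<and> P (R v) \<subseteq> M"
    using maximal_clique_superset[OF finite_V] by blast
  then show ?thesis unfolding parent_clique_def by (rule someI_ex)
qed

lemma colour_less: "v \<in> V \<Longrightarrow> 0 < L v \<Longrightarrow> colour v < c"
  unfolding colour_def using parent_clique col_less by blast

lemma colour_class: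
  assumes "j < c"
  shows "distinct (colour_class j) \<and> set (colour_class j) = {C \<in> maximal_cliques V E'. col C = j} \<and>
    (\<forall>i j'. i < j' \<and> j' < length (colour_class j) \<longrightarrow>
      clique_precedes tr ord (colour_class j ! i) (colour_class j ! j'))"
  using col_nicely_ordered[OF assms] unfolding nicely_ordered_def colour_class_def by (rule someI_ex)

lemma clique_index:
  assumes "v \<in> V" "0 < L v"
  shows "clique_index v < length (colour_class (colour v)) \<and>
    colour_class (colour v) ! clique_index v = parent_clique v"
proof -
  have "parent_clique v \<in> set (colour_class (colour v))"
    using colour_class[OF colour_less[OF assms]] parent_clique[OF assms] colour_def by auto
  then show ?thesis unfolding clique_index_def in_set_conv_nth by (rule someI_ex)
qed

lemma shift_less: "shift v < 2 * c + 1"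
  unfolding shift_def by (cases "L v") simp_all

lemma shift_key_rising:
  assumes "v \<in> V" "0 < L v" "u \<in> P (R v)"
  shows "shift v = (shift u + Suc (colour v)) mod (2 * c + 1) \<and> key v = key u @ [clique_index v]"
proof -
  have u: "Suc (L u) = L v" "R u = R (parent v)" using parent_facts[OF assms] by blast+
  then show ?thesis
    unfolding shift_def key_def using shift_at_block[OF u(2)] key_at_block[OF u(2)]
    by (metis shift_at.simps(2) key_at.simps(2))
qed

lemma shift_key_flat: "L v = L w \<Longrightarrow> R v = R w \<Longrightarrow> shift v = shift w \<and> key v = key w"
  unfolding shift_def key_def using shift_at_block key_at_block by metis

definition "flat x y \<longleftrightarrow> L x = L y \<and> (x,y) \<in> E' \<and> shift x = shift y \<and> key x = key y"
definition "rises x y \<longleftrightarrow> y \<in> V \<and> Suc (L x) = L y \<and> x \<in> parent_clique y \<and>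
  shift y = (shift x + Suc (colour y)) mod (2 * c + 1) \<and> key y = key x @ [clique_index y]"

lemma edge_flat_or_rises:
  assumes "(x,y) \<in> E"
  shows "flat x y \<or> rises x y \<or> rises y x"
proof -
  have rise: "rises a b" if "(a,b) \<in> E" "Suc (L a) = L b" for a b
  proof -
    have b: "b \<in> V" "0 < L b" "a \<in> P (R b)" using that edge_in_V rising_edge by auto
    show ?thesis
      unfolding rises_def using that(2) b shift_key_rising[OF b] parent_clique[OF b(1,2)] by blast
  qed
  consider "L x = L y" | "Suc (L x) = L y" | "Suc (L y) = L x" using edge_levels[OF assms] by auto
  then show ?thesis
  proof cases
    case 1
    then have "flat x y"
      unfolding flat_def using flat_edge[OF assms] shift_key_flat[OF 1] by blast
    then show ?thesis ..
  next
    case 2 then show ?thesis using rise[OF assms] by blast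
  next
    case 3 then show ?thesis using rise[OF E_sym[OF assms]] by blast
  qed
qed

lemma rises_in_V: "rises x y \<Longrightarrow> x \<in> V \<and> y \<in> V \<and> 0 < L y"
  unfolding rises_def using parent_clique unfolding maximal_cliques_def is_clique_def by fastforce

lemma rises_colour_less: "rises x y \<Longrightarrow> colour y < c"
  unfolding rises_def using colour_less by auto

lemma rises_shift_neq: "rises x y \<Longrightarrow> shift x \<noteq> shift y"
proof
  assume r: "rises x y" and eq: "shift x = shift y"
  have "(shift x + Suc (colour y)) mod (2 * c + 1) = (shift x + 0) mod (2 * c + 1)"
    using r eq shift_less[of x] unfolding rises_def by simp
  from mod_add_left_cancel_less[OF this] show False using rises_colour_less[OF r] by simp
qed

lemma rises_not_opposite:
  assumes r: "rises u v" "rises y x" and eq: "shift u = shift x" "shift v = shift y"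
  shows False
proof -
  let ?m = "2 * c + 1"
  have "(shift u + (Suc (colour v) + Suc (colour x))) mod ?m
      = ((shift u + Suc (colour v)) mod ?m + Suc (colour x)) mod ?m"
    by (simp only: mod_add_left_eq add.assoc)
  also have "\<dots> = (shift y + Suc (colour x)) mod ?m"
    using r(1) eq(2) unfolding rises_def by simp
  also have "\<dots> = (shift u + 0) mod ?m"
    using r(2) eq(1) shift_less[of u] unfolding rises_def by simp
  finally have "(shift u + (Suc (colour v) + Suc (colour x))) mod ?m = (shift u + 0) mod ?m" .
  from mod_add_left_cancel_less[OF this] show False
    using rises_colour_less[OF r(1)] rises_colour_less[OF r(2)] by simp
qed

lemma rises_same_colour:
  assumes r: "rises u v" "rises x y" and eq: "shift u = shift x" "shift v = shift y"
  shows "colour v = colour y"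
proof -
  have "(shift u + Suc (colour v)) mod (2 * c + 1) = (shift u + Suc (colour y)) mod (2 * c + 1)"
    using r eq unfolding rises_def by simp
  from mod_add_left_cancel_less[OF this] show ?thesis
    using rises_colour_less[OF r(1)] rises_colour_less[OF r(2)] by simp
qed

lemma parent_cliques_ordered:
  assumes p: "p \<in> V" "0 < L p" and q: "q \<in> V" "0 < L q"
    and same_colour: "colour p = colour q" and index: "clique_index p \<le> clique_index q"
    and a: "a \<in> parent_clique p" and b: "b \<in> parent_clique q" and "a \<noteq> b" "tr a = tr b"
  shows "(a,b) \<in> ord (tr a)"
proof (cases "clique_index p = clique_index q")
  case True
  then have "parent_clique p = parent_clique q"
    using clique_index[OF p] clique_index[OF q] same_colour by metis
  then have "(a,b) \<in> E'"
    using parent_clique[OF q] a b \<open>a \<noteq> b\<close> unfolding maximal_cliques_def is_clique_def by blast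
  then show ?thesis using tr_edge \<open>tr a = tr b\<close> by blast
next
  case False
  then have "clique_precedes tr ord (parent_clique p) (parent_clique q)"
    using colour_class[OF colour_less[OF p]] clique_index[OF p] clique_index[OF q] same_colour index
    by (metis le_neq_implies_less)
  then show ?thesis using a b \<open>tr a = tr b\<close> unfolding clique_precedes_def by blast
qed

definition "crossing u v x y \<longleftrightarrow> shift u = shift x \<and> tr u = tr x \<and> shift v = shift y \<and> tr v = tr y \<and>
  before u x \<and> u \<noteq> x \<and> before y v \<and> y \<noteq> v"

lemma crossing_swap: "crossing u v x y \<Longrightarrow> crossing y x v u"
  unfolding crossing_def by auto

lemma crossing_flat_flat:
  assumes "crossing u v x y" "flat u v" "flat x y"
  shows False
proof -
  have "(L u, key u) = (L x, key x)"
    using assms unfolding crossing_def before_def flat_def by auto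
  then have "(u,x) \<in> ord (tr u)" "(y,v) \<in> ord (tr v)"
    using assms unfolding crossing_def before_def flat_def by auto
  moreover have "tr u \<noteq> tr v" using assms(2) tr_edge unfolding flat_def by blast
  ultimately have "has_X_crossing E' tr ord"
    using assms unfolding has_X_crossing_def crossing_def flat_def by metis
  then show False using no_old_crossing by blast
qed

lemma crossing_rises_rises:
  assumes cr: "crossing u v x y" and r: "rises u v" "rises x y"
  shows False
proof -
  have bux: "before u x" and byv: "before y v" and "u \<noteq> x" and tr_ux: "tr u = tr x"
    using cr unfolding crossing_def by blast+
  have uv: "u \<in> V" "v \<in> V" "0 < L v" and xy: "x \<in> V" "y \<in> V" "0 < L y"
    using rises_in_V[OF r(1)] rises_in_V[OF r(2)] by blast+
  have "L u \<le> L x" "L y \<le> L v" using before_cases[OF bux] before_cases[OF byv] by auto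
  then have levels: "L u = L x" "L v = L y" using r unfolding rises_def by linarith+
  then have len: "length (key x) = length (key u)" unfolding key_def by (simp add: length_key_at)
  have "key y \<le> key v" using before_cases[OF byv] levels(2) by auto
  then have "key x @ [clique_index y] \<le> key u @ [clique_index v]"
    using r unfolding rises_def by simp
  then have keys: "key x < key u \<or> key x = key u \<and> clique_index y \<le> clique_index v"
    unfolding append_le_append_same_length[OF len] by auto
  have keys': "key u < key x \<or> key u = key x \<and> (u,x) \<in> ord (tr u)"
    using before_cases[OF bux] levels(1) by auto
  have "key u = key x"
  proof (rule ccontr)
    assume "key u \<noteq> key x"
    then have "key u < key x" "key x < key u" using keys keys' by auto
    then show False using less_asym by blast
  qed
  then have ord_ux: "(u,x) \<in> ord (tr u)" and index: "clique_index y \<le> clique_index v"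
    using keys keys' by auto
  have "colour y = colour v"
    using rises_same_colour[OF r] cr unfolding crossing_def by simp
  moreover have "x \<in> parent_clique y" "u \<in> parent_clique v" using r unfolding rises_def by blast+
  moreover have "x \<noteq> u" "tr x = tr u" using \<open>u \<noteq> x\<close> tr_ux by simp_all
  ultimately have "(x,u) \<in> ord (tr x)" by (rule parent_cliques_ordered[OF xy(2,3) uv(2,3) _ index])
  then have "u = x" using ord_antisym[OF ord_ux _ uv(1)] tr_ux by simp
  then show False using \<open>u \<noteq> x\<close> by blast
qed

lemma track_div_mod:
  assumes "v \<in> V"
  shows "track v div t = shift v" "track v mod t = tr v"
proof -
  have "0 < t" "tr v < t" using tr_less[OF assms] by simp_all
  then show "track v div t = shift v" "track v mod t = tr v" unfolding track_def by simp_all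
qed

lemma track_eq_iff: "v \<in> V \<Longrightarrow> w \<in> V \<Longrightarrow> track v = track w \<longleftrightarrow> shift v = shift w \<and> tr v = tr w"
  using track_div_mod[of v] track_div_mod[of w] unfolding track_def by metis

lemma track_less: "v \<in> V \<Longrightarrow> track v < t * (2 * c + 1)"
proof -
  assume v: "v \<in> V"
  have "track v < (shift v + 1) * t" unfolding track_def using tr_less[OF v] by simp
  also have "\<dots> \<le> (2 * c + 1) * t" using shift_less[of v] by (intro mult_right_mono) simp_all
  finally show ?thesis by (simp add: mult.commute)
qed

lemma edge_tracks_differ:
  assumes "(x,y) \<in> E"
  shows "track x \<noteq> track y"
proof -
  have "x \<in> V" "y \<in> V" using edge_in_V[OF assms] by auto
  moreover have "tr x \<noteq> tr y \<or> shift x \<noteq> shift y"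
    using edge_flat_or_rises[OF assms] tr_edge rises_shift_neq unfolding flat_def by metis
  ultimately show ?thesis using track_eq_iff by blast
qed

lemma track_order_linear:
  assumes "i < t * (2 * c + 1)"
  shows "linear_order_on {v\<in>V. track v = i} (track_order i)"
proof -
  let ?A = "{v\<in>V. track v = i}"
  have t: "i mod t < t" using assms by (cases t) simp_all
  have tr_A: "tr v = i mod t" if "v \<in> ?A" for v using that track_div_mod by auto
  then have "linear_order_on ?A
    {(v,w). v \<in> ?A \<and> w \<in> ?A \<and> ((L v, key v) < (L w, key w) \<or> (L v, key v) = (L w, key w) \<and> (v,w) \<in> ord (i mod t))}"
    by (intro linear_order_on_refine[OF ord_linear[OF t]]) auto
  moreover have "track_order i = {(v,w). v \<in> ?A \<and> w \<in> ?A \<and>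
    ((L v, key v) < (L w, key w) \<or> (L v, key v) = (L w, key w) \<and> (v,w) \<in> ord (i mod t))}"
    unfolding track_order_def before_def using tr_A by auto
  ultimately show ?thesis by simp
qed

lemma no_X_crossing: "\<not> has_X_crossing E track track_order"
proof
  assume "has_X_crossing E track track_order"
  then obtain u v x y where e: "(u,v) \<in> E" "(x,y) \<in> E"
    and tracks: "track u = track x" "track v = track y"
    and ux: "before u x" "u \<noteq> x" and yv: "before y v" "y \<noteq> v"
    unfolding has_X_crossing_def track_order_def by blast
  have "u \<in> V" "v \<in> V" "x \<in> V" "y \<in> V" using edge_in_V e by blast+
  then have cr: "crossing u v x y"
    using tracks ux yv track_eq_iff unfolding crossing_def by blast
  have flat_shift: "flat a b \<Longrightarrow> shift a = shift b" for a b unfolding flat_def by blast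
  have "shift u = shift x" "shift v = shift y" using cr unfolding crossing_def by blast+
  from edge_flat_or_rises[OF e(1)] edge_flat_or_rises[OF e(2)] show False
    using crossing_flat_flat[OF cr] crossing_rises_rises[OF cr] crossing_rises_rises[OF crossing_swap[OF cr]]
      rises_not_opposite[of u v y x] rises_not_opposite[of x y v u] rises_shift_neq flat_shift
    by (metis \<open>shift u = shift x\<close> \<open>shift v = shift y\<close>)
qed

lemma refined_track_layout: "track_layout V E (t * (2 * c + 1)) track track_order"
  unfolding track_layout_def track_assignment_def
  using track_less edge_tracks_differ track_order_linear no_X_crossing by blast

end

theorem lemma5:
  fixes k c t :: nat
  assumes "k \<ge> 1" and "c \<ge> 1" and "t \<ge> 1"
    and "\<forall>V E. ktree k V E \<longrightarrow>
           (\<exists>tr ord. track_layout V E t tr ord \<and> clique_colorable V E tr ord c)"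
  shows "\<forall>V E. ktree (k + 1) V E \<longrightarrow> track_number V E \<le> t * (2 * c + 1)"
proof (intro allI impI)
  fix V E assume "ktree (k + 1) V E"
  then have kt: "ktree (Suc k) V E" by simp
  then obtain L R P E' where layering: "ktree_layering k V E L R P E'"
    using ktree_layering_exists by blast
  then have "ktree k V E'" by (rule ktree_layering.ktree_layers)
  then obtain tr ord col where layout: "track_layout V E' t tr ord"
    and col: "\<forall>C\<in>maximal_cliques V E'. col C < c"
      "\<forall>j<c. nicely_ordered tr ord {C \<in> maximal_cliques V E'. col C = j}"
    using assms(4) unfolding clique_colorable_def by blast
  have "layered_track_layout k V E L R P E' t c tr ord col"
  proof (intro layered_track_layout.intro layered_track_layout_axioms.intro)
    show "ktree_layering k V E L R P E'" by (rule layering)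
    show "(u,w) \<in> E \<Longrightarrow> (w,u) \<in> E" for u w using ktree_sym[OF kt] .
  qed (use layout col in blast)+
  then have "\<exists>tr ord. track_layout V E (t * (2 * c + 1)) tr ord"
    using layered_track_layout.refined_track_layout by blast
  then show "track_number V E \<le> t * (2 * c + 1)"
    unfolding track_number_def by (rule Least_le)
qed

end
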